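(* Let $m \in \mathbb{N}$, $k \geq 4$ and $|q - q_k| < q_k^{-(m+2)k-3}$. Writing $L(X) = \min X$ and $R(X) = \max X$ for compact $X\subset\mathbb{R}$: (a) If $q < q_k$ then $L(Q_m(q)) < L(P_0(q)) < \cdots < L(P_m(q)) < R(Q_m(q)) < R(P_0(q)) < \cdots < R(P_m(q))$. (b) If $q = q_k$ then $L(Q_m(q)) < L(P_0(q)) = \cdots = L(P_m(q)) < R(Q_m(q)) < R(P_0(q)) = \cdots = R(P_m(q))$. (c) If $q > q_k$ then $L(Q_m(q)) < L(P_m(q)) < \cdots < L(P_0(q)) < R(Q_m(q)) < R(P_m(q)) < \cdots < R(P_0(q))$.
   Context: $q_j$ ($j\ge2$) is the unique root in $(1,2)$ of $x^j - x^{j-1} - \cdots - x - 1 = 0$. $\pi_q((\epsilon_j)_{j\ge1}) = \sum_{j\ge1}\epsilon_j q^{-j}$. Words are concatenated; $a^n$ is $n$ repetitions, $w^\infty$ infinite repetition. $S_{k-1}$ is the set of $(\epsilon_j) \in \{0,1\}^\mathbb{N}$ containing no block of consecutive entries equal to $01^{k-1}$ or $10^{k-1}$. $g_{q,k}(x) = q^{-k}x + \sum_{j=1}^{k-1}q^{-j}$, with $g_{q,k}^i$ its $i$-fold composition. Define $P_i(q) = g_{q,k}^i(\pi_q(S_{k-1})+1) \cap \big[g_{q,k}^i(1),\ g_{q,k}^i\big(1 + q^{-(m-i)k}\pi_q(0^{k-3}(01^{k-1})^\infty)\big)\big]$ for $0\le i\le m$, and $Q_m(q) = g_{q,k}^m(\pi_q(S_{k-1}))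 \cap \big[g_{q,k}^m(\pi_q(1^{k-3}(10^{k-1})^\infty)),\ g_{q,k}^m(\pi_q(1^\infty))\big]$. *)

theory Defs
  imports Complex_Main
begin

definition qk :: "nat \<Rightarrow> real" where
  "qk j = (THE x. 1 < x \<and> x < 2 \<and> x ^ j - (\<Sum>i<j. x ^ i) = 0)"

text \<open>Binary sequences (\<epsilon>_1, \<epsilon>_2, ...) are represented as nat \<Rightarrow> bool,
  with index 0 holding \<epsilon>_1.\<close>
definition pi_q :: "real \<Rightarrow> (nat \<Rightarrow> bool) \<Rightarrow> real" where
  "pi_q q e = (\<Sum>j. (if e j then 1 else 0) * (1 / q) ^ (Suc j))"

definition pre_per :: "bool list \<Rightarrow> bool list \<Rightarrow> nat \<Rightarrow> bool" where
  "pre_per u w j = (if j < length u then u ! j else w ! ((j - length u) mod length w))"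

text \<open>S_{k-1}: sequences containing no block 0 1^{k-1} nor 1 0^{k-1}.\<close>
definition S_set :: "nat \<Rightarrow> (nat \<Rightarrow> bool) set" where
  "S_set k = {e. \<forall>n. \<not> (\<not> e n \<and> (\<forall>i\<in>{1..k-1}. e (n + i)))
                   \<and> \<not> (e n \<and> (\<forall>i\<in>{1..k-1}. \<not> e (n + i)))}"

definition g_qk :: "real \<Rightarrow> nat \<Rightarrow> real \<Rightarrow> real" where
  "g_qk q k x = x / q ^ k + (\<Sum>j\<in>{1..k-1}. 1 / q ^ j)"

definition P_set :: "nat \<Rightarrow> nat \<Rightarrow> nat \<Rightarrow> real \<Rightarrow> real set" where
  "P_set m k i q =
     (g_qk q k ^^ i) ` ((\<lambda>e. pi_q q e + 1) ` S_set k) \<inter>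
     {(g_qk q k ^^ i) 1 ..
      (g_qk q k ^^ i) (1 + (1 / q) ^ ((m - i) * k) *
          pi_q q (pre_per (replicate (k - 3) False) (False # replicate (k - 1) True)))}"

definition Q_set :: "nat \<Rightarrow> nat \<Rightarrow> real \<Rightarrow> real set" where
  "Q_set m k q =
     (g_qk q k ^^ m) ` (pi_q q ` S_set k) \<inter>
     {(g_qk q k ^^ m) (pi_q q (pre_per (replicate (k - 3) True) (True # replicate (k - 1) False))) ..
      (g_qk q k ^^ m) (pi_q q (pre_per [] [True]))}"

definition Lm :: "real set \<Rightarrow> real" where "Lm X = (LEAST x. x \<in> X)"
definition Rm :: "real set \<Rightarrow> real" where "Rm X = (GREATEST x. x \<in> X)"

end

(* Write r = 1/q and phi(q) = r + r^2 + ... + r^k, so that phi(q_k) = 1. The map g = g_{q,k} is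
   affine, g(x) = phi(q) + r^k (x - 1); hence g^i(x) = g^i(1) + r^(ki) (x - 1), and
   g^(i+1)(1) - g^i(1) = (phi(q) - 1) r^(ki) has the sign of q_k - q.
   A point of pi_q(S_{k-1}) below r^n c, where c = pi_q(0^{k-3}(01^{k-1})^oo) < 1, begins with n
   zeros, and conversely such zeros may be prepended. So every P_i(q) is the translate by g^i(1)
   of one set r^(km) T, with T the part of pi_q(S_{k-1}) in [0, c], and Q_m(q) = g^m(U) with U
   the part of pi_q(S_{k-1}) in [pi_q(1^{k-3}(10^{k-1})^oo), pi_q(1^oo)]. This gives
   L(P_i(q)) = g^i(1) and R(Q_m(q)) = g^m(pi_q(1^oo)) exactly, while max T and min U are
   bracketed by the witnesses 0^{k-2}(10)^oo and 1^{k-2}(01)^oo. Each remaining comparison pits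
   |phi(q) - 1| (q - 1) <= |q - q_k| against a multiple of r^(km+k-1), and the hypothesis on
   |q - q_k| makes the former negligible; for q > q_k this uses (q_k/q)^(km+k+1) >= 3/4, by
   Bernoulli's inequality. *)

theory Submission
  imports Defs "HOL-Analysis.Analysis"
begin

lemma compact_bool_sequences: "compact (UNIV :: (nat \<Rightarrow> bool) set)"
  using compactin_PiE[of "\<lambda>_. euclidean" UNIV "\<lambda>_::nat. UNIV :: bool set"]
  by (simp add: finite_imp_compact euclidean_product_topology)

lemma S_set_iff: "e \<in> S_set k \<longleftrightarrow> (\<forall>n. \<exists>i\<in>{1..k-1}. e (n + i) = e n)"
proof -
  have "(\<not> (\<not> e n \<and> (\<forall>i\<in>{1..k-1}. e (n + i))) \<and> \<not> (e n \<and> (\<forall>i\<in>{1..k-1}. \<not> e (n + i))))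
        \<longleftrightarrow> (\<exists>i\<in>{1..k-1}. e (n + i) = e n)" for n
    by (cases "e n") auto
  then show ?thesis
    unfolding S_set_def by blast
qed

lemma closed_S_set: "closed (S_set k)"
proof -
  have "S_set k = (\<Inter>n. \<Union>i\<in>{1..k-1}. {e. e (n + i) = e n})"
    by (auto simp: S_set_iff)
  moreover have "closed {e :: nat \<Rightarrow> bool. e (n + i) = e n}" for n i
    by (intro closed_Collect_eq continuous_on_product_coordinates)
  ultimately show ?thesis
    by (simp add: closed_INT closed_UN)
qed

lemma const_in_S_set: "2 \<le> k \<Longrightarrow> (\<lambda>_. b) \<in> S_set k"
  unfolding S_set_iff by force

lemma shift_in_S_set: "e \<in> S_set k \<Longrightarrow> (\<lambda>j. e (j + n)) \<in> S_set k"
  unfolding S_set_iff by (metis add.assoc add.commute)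

lemma prepend_zeros_in_S_set:
  assumes "e \<in> S_set k" and "\<not> (\<forall>j<k-1. e j)"
  shows "(\<lambda>j. if j < n then False else e (j - n)) \<in> S_set k" (is "?e \<in> _")
proof -
  obtain j0 where j0: "j0 < k - 1" "\<not> e j0"
    using assms(2) by blast
  have "\<exists>i\<in>{1..k-1}. ?e (p + i) = ?e p" for p
  proof (cases "n \<le> p")
    case True
    obtain i where "i \<in> {1..k-1}" "e (p - n + i) = e (p - n)"
      using assms(1) unfolding S_set_iff by blast
    with True show ?thesis
      by (intro bexI[of _ i]) (auto simp: add.commute add.left_commute)
  next
    case False
    show ?thesis
    proof (cases "Suc p = n")
      case True
      with j0 show ?thesis by (intro bexI[of _ "Suc j0"]) auto
    next
      case False
      with \<open>\<not> n \<le> p\<close> j0 show ?thesis by (intro bexI[of _ 1]) auto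
    qed
  qed
  then show ?thesis
    unfolding S_set_iff by blast
qed

section \<open>The projection \<open>pi_q\<close>\<close>

abbreviation digit :: "bool \<Rightarrow> real" where
  "digit b \<equiv> if b then 1 else 0"

lemma summable_digits:
  assumes "1 < q"
  shows "summable (\<lambda>j. digit (e j) * (1/q) ^ Suc j)"
proof -
  have geometric: "summable (\<lambda>j. (1/q) ^ Suc j)"
    unfolding power_Suc by (rule summable_mult, rule summable_geometric) (use assms in simp)
  have "norm (digit (e j) * (1/q) ^ Suc j) \<le> (1/q) ^ Suc j" for j
    using assms by simp
  then show ?thesis
    by (intro summable_comparison_test'[OF geometric, of 0])
qed

lemma continuous_on_pi_q:
  assumes "1 < q"
  shows "continuous_on UNIV (pi_q q)"
proof (rule uniform_limit_theorem)
  show "uniform_limit UNIV (\<lambda>n e. \<Sum>j<n. digit (e j) * (1/q) ^ Suc j) (pi_q q) sequentially"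
    unfolding pi_q_def[abs_def]
    by (rule Weierstrass_m_test[where M = "\<lambda>j. (1/q) ^ Suc j"])
       (use assms in \<open>auto intro!: summable_mult summable_geometric\<close>)
  have digit_cont: "continuous_on UNIV (\<lambda>e::nat \<Rightarrow> bool. digit (e j) * c)" for j c
    using continuous_on_compose[of UNIV "\<lambda>e::nat \<Rightarrow> bool. e j" "\<lambda>b. digit b * c"]
    by (simp add: o_def)
  then show "\<forall>\<^sub>F n in sequentially. continuous_on UNIV (\<lambda>e. \<Sum>j<n. digit (e j) * (1/q) ^ Suc j)"
    by (intro always_eventually allI continuous_on_sum digit_cont)
qed simp

lemma compact_pi_q_S_set: "1 < q \<Longrightarrow> compact (pi_q q ` S_set k)"
  using compact_Int_closed[OF compact_bool_sequences closed_S_set]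
  by (intro compact_continuous_image continuous_on_subset[OF continuous_on_pi_q]) auto

lemma pi_q_split:
  assumes "1 < q"
  shows "pi_q q e = (\<Sum>j<n. digit (e j) * (1/q) ^ Suc j) + (1/q) ^ n * pi_q q (\<lambda>j. e (j + n))"
proof -
  have "pi_q q e = (\<Sum>j. digit (e (j + n)) * (1/q) ^ Suc (j + n)) + (\<Sum>j<n. digit (e j) * (1/q) ^ Suc j)"
    unfolding pi_q_def by (rule suminf_split_initial_segment[OF summable_digits[OF assms]])
  also have "(\<Sum>j. digit (e (j + n)) * (1/q) ^ Suc (j + n))
      = (\<Sum>j. (1/q) ^ n * (digit (e (j + n)) * (1/q) ^ Suc j))"
    by (simp add: power_add mult_ac)
  also have "\<dots> = (1/q) ^ n * pi_q q (\<lambda>j. e (j + n))"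
    unfolding pi_q_def by (rule suminf_mult[OF summable_digits[OF assms]])
  finally show ?thesis by simp
qed

lemma pi_q_leading_zeros:
  assumes "1 < q" and "\<And>j. j < n \<Longrightarrow> \<not> e j"
  shows "pi_q q e = (1/q) ^ n * pi_q q (\<lambda>j. e (j + n))"
  using pi_q_split[OF assms(1), of e n] assms(2) by simp

lemma pi_q_periodic:
  assumes "1 < q" and "0 < p" and "\<And>j. e (j + p) = e j"
  shows "pi_q q e = (\<Sum>j<p. digit (e j) * (1/q) ^ Suc j) / (1 - (1/q) ^ p)"
proof -
  let ?S = "\<Sum>j<p. digit (e j) * (1/q) ^ Suc j"
  have "(\<lambda>j. e (j + p)) = e"
    using assms(3) by auto
  then have "pi_q q e = ?S + (1/q) ^ p * pi_q q e"
    using pi_q_split[OF assms(1), of e p] by simp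
  then have "pi_q q e - (1/q) ^ p * pi_q q e = ?S"
    by linarith
  then have "pi_q q e * (1 - (1/q) ^ p) = ?S"
    by (simp add: algebra_simps)
  moreover have "(1/q) ^ p < 1"
    using assms by (simp add: power_less_one_iff)
  ultimately show ?thesis
    by (simp add: eq_divide_eq)
qed

lemma pi_q_all_ones: "1 < q \<Longrightarrow> pi_q q (\<lambda>_. True) = (1/q) / (1 - 1/q)"
  using pi_q_periodic[of q 1 "\<lambda>_. True"] by simp

lemma pi_q_all_zeros: "pi_q q (\<lambda>_. False) = 0"
  unfolding pi_q_def by simp

lemma pi_q_nonneg: "1 < q \<Longrightarrow> 0 \<le> pi_q q e"
  unfolding pi_q_def by (intro suminf_nonneg summable_digits) auto

lemma pi_q_mono:
  assumes "1 < q" and "\<And>j. e j \<Longrightarrow> e' j"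
  shows "pi_q q e \<le> pi_q q e'"
  unfolding pi_q_def using assms by (intro suminf_le summable_digits) auto

lemma pi_q_le_all_ones: "1 < q \<Longrightarrow> pi_q q e \<le> (1/q) / (1 - 1/q)"
  using pi_q_mono[of q e "\<lambda>_. True"] pi_q_all_ones by simp

lemma pi_q_ge_digit:
  assumes "1 < q" and "e i"
  shows "(1/q) ^ Suc i \<le> pi_q q e"
proof -
  have "(\<Sum>j\<in>{i}. digit (e j) * (1/q) ^ Suc j) \<le> pi_q q e"
    unfolding pi_q_def using assms(1) by (intro sum_le_suminf summable_digits) auto
  then show ?thesis
    using assms(2) by simp
qed

lemma pi_q_ge_prefix_sum:
  assumes "1 < q" and "\<And>j. j < n \<Longrightarrow> e j"
  shows "(\<Sum>j<n. (1/q) ^ Suc j) \<le> pi_q q e"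
proof -
  have "(\<Sum>j<n. (1/q) ^ Suc j) = (\<Sum>j<n. digit (e j) * (1/q) ^ Suc j)"
    using assms(2) by simp
  also have "\<dots> \<le> pi_q q e"
    unfolding pi_q_def using assms(1) by (intro sum_le_suminf summable_digits) auto
  finally show ?thesis .
qed

lemma pi_q_small_imp_leading_zeros:
  assumes "1 < q" and "pi_q q e < (1/q) ^ n" and "j < n"
  shows "\<not> e j"
proof
  assume "e j"
  then have "(1/q) ^ Suc j \<le> pi_q q e"
    by (rule pi_q_ge_digit[OF assms(1)])
  moreover have "(1/q) ^ n \<le> (1/q) ^ Suc j"
    using assms by (intro power_decreasing) auto
  ultimately show False
    using assms(2) by linarith
qed

lemma pi_q_S_set_Int_scaled_subset:
  assumes "1 < q" and "c < 1"
  shows "pi_q q ` S_set k \<inter> {0..(1/q) ^ n * c} \<subseteq> (\<lambda>t. (1/q) ^ n * t) ` (pi_q q ` S_set k \<inter> {0..c})"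
proof
  fix t
  assume "t \<in> pi_q q ` S_set k \<inter> {0..(1/q) ^ n * c}"
  then obtain e where e: "e \<in> S_set k" "t = pi_q q e" "t \<le> (1/q) ^ n * c"
    by auto
  have rn: "0 < (1/q) ^ n"
    using assms by simp
  then have "(1/q) ^ n * c < (1/q) ^ n"
    using assms(2) by simp
  with e have "pi_q q e < (1/q) ^ n"
    by linarith
  then have "\<not> e j" if "j < n" for j
    using pi_q_small_imp_leading_zeros[OF assms(1) _ that] by blast
  then have t: "t = (1/q) ^ n * pi_q q (\<lambda>j. e (j + n))"
    using pi_q_leading_zeros[OF assms(1)] e(2) by blast
  moreover have "(\<lambda>j. e (j + n)) \<in> S_set k"
    using e(1) by (rule shift_in_S_set)
  moreover have "pi_q q (\<lambda>j. e (j + n)) \<le> c"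
    using t e(3) rn by simp
  ultimately show "t \<in> (\<lambda>t. (1/q) ^ n * t) ` (pi_q q ` S_set k \<inter> {0..c})"
    using pi_q_nonneg[OF assms(1)] by auto
qed

lemma pi_q_S_set_Int_scaled_supset:
  assumes "1 < q" and "c < (\<Sum>j<k-1. (1/q) ^ Suc j)"
  shows "(\<lambda>t. (1/q) ^ n * t) ` (pi_q q ` S_set k \<inter> {0..c}) \<subseteq> pi_q q ` S_set k \<inter> {0..(1/q) ^ n * c}"
proof
  fix t
  assume "t \<in> (\<lambda>t. (1/q) ^ n * t) ` (pi_q q ` S_set k \<inter> {0..c})"
  then obtain e where e: "e \<in> S_set k" "t = (1/q) ^ n * pi_q q e" "pi_q q e \<le> c"
    by auto
  have "\<not> (\<forall>j<k-1. e j)"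
    using pi_q_ge_prefix_sum[OF assms(1), of "k - 1" e] e(3) assms(2) by auto
  with e(1) have "(\<lambda>j. if j < n then False else e (j - n)) \<in> S_set k" (is "?e \<in> _")
    by (rule prepend_zeros_in_S_set)
  moreover have "pi_q q ?e = t"
    using pi_q_leading_zeros[OF assms(1), of n ?e] e(2) by simp
  moreover have "0 \<le> t" "t \<le> (1/q) ^ n * c"
    using e pi_q_nonneg[OF assms(1), of e] assms(1) by (simp_all add: mult_left_mono)
  ultimately show "t \<in> pi_q q ` S_set k \<inter> {0..(1/q) ^ n * c}"
    by force
qed

lemma pi_q_S_set_Int_scaled:
  assumes "1 < q" and "c < 1" and "c < (\<Sum>j<k-1. (1/q) ^ Suc j)"
  shows "pi_q q ` S_set k \<inter> {0..(1/q) ^ n * c} = (\<lambda>t. (1/q) ^ n * t) ` (pi_q q ` S_set k \<inter> {0..c})"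
  using pi_q_S_set_Int_scaled_subset[OF assms(1,2)] pi_q_S_set_Int_scaled_supset[OF assms(1,3)]
  by (rule equalityI)

section \<open>Witness sequences\<close>

(* 1^{k-2}(01)^oo and 0^{k-2}(10)^oo: points of Q_core and P_core near their minimum and maximum. *)
definition ones_then_01 :: "nat \<Rightarrow> nat \<Rightarrow> bool" where
  "ones_then_01 k j \<longleftrightarrow> j < k - 2 \<or> odd (j - (k - 2))"

definition zeros_then_10 :: "nat \<Rightarrow> nat \<Rightarrow> bool" where
  "zeros_then_10 k j \<longleftrightarrow> k - 2 \<le> j \<and> even (j - (k - 2))"

abbreviation P_end :: "nat \<Rightarrow> nat \<Rightarrow> bool" where
  "P_end k \<equiv> pre_per (replicate (k - 3) False) (False # replicate (k - 1) True)"

abbreviation Q_start :: "nat \<Rightarrow> nat \<Rightarrow> bool" where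
  "Q_start k \<equiv> pre_per (replicate (k - 3) True) (True # replicate (k - 1) False)"

lemma pre_per_all_ones: "pre_per [] [True] = (\<lambda>_. True)"
  unfolding pre_per_def by auto

lemma ones_then_01_in_S_set:
  assumes "3 \<le> k"
  shows "ones_then_01 k \<in> S_set k"
  unfolding S_set_iff
proof
  fix n
  consider "n + 1 < k - 2" | "n + 1 = k - 2" | "k - 2 \<le> n"
    by linarith
  then show "\<exists>i\<in>{1..k-1}. ones_then_01 k (n + i) = ones_then_01 k n"
  proof cases
    case 1
    with assms show ?thesis
      by (intro bexI[of _ 1]) (auto simp: ones_then_01_def)
  next
    case 2
    with assms show ?thesis
      by (intro bexI[of _ 2]) (auto simp: ones_then_01_def)
  next
    case 3
    then have "n + 2 - (k - 2) = (n - (k - 2)) + 2"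
      by simp
    with 3 assms show ?thesis
      by (intro bexI[of _ 2]) (auto simp: ones_then_01_def)
  qed
qed

lemma zeros_then_10_in_S_set:
  assumes "3 \<le> k"
  shows "zeros_then_10 k \<in> S_set k"
  unfolding S_set_iff
proof
  fix n
  consider "n + 1 < k - 2" | "n + 1 = k - 2" | "k - 2 \<le> n"
    by linarith
  then show "\<exists>i\<in>{1..k-1}. zeros_then_10 k (n + i) = zeros_then_10 k n"
  proof cases
    case 1
    with assms show ?thesis
      by (intro bexI[of _ 1]) (auto simp: zeros_then_10_def)
  next
    case 2
    with assms show ?thesis
      by (intro bexI[of _ 2]) (auto simp: zeros_then_10_def)
  next
    case 3
    then have "n + 2 - (k - 2) = (n - (k - 2)) + 2"
      by simp
    with 3 assms show ?thesis
      by (intro bexI[of _ 2]) (auto simp: zeros_then_10_def)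
  qed
qed

lemma P_end_initial_zeros: "3 \<le> k \<Longrightarrow> j < k - 2 \<Longrightarrow> \<not> P_end k j"
  unfolding pre_per_def by (cases "j < k - 3") auto

lemma P_end_ones:
  assumes "3 \<le> k" and "j < k - 1"
  shows "P_end k (j + (k - 2))"
proof -
  have "\<not> j + (k - 2) < k - 3" and "(j + (k - 2) - (k - 3)) mod Suc (k - 1) = Suc j"
    using assms by auto
  with assms show ?thesis
    unfolding pre_per_def by simp
qed

lemma Q_start_zeros:
  assumes "3 \<le> k" and "j < k - 1"
  shows "\<not> Q_start k (j + (k - 2))"
proof -
  have "\<not> j + (k - 2) < k - 3" and "(j + (k - 2) - (k - 3)) mod Suc (k - 1) = Suc j"
    using assms by auto
  with assms show ?thesis
    unfolding pre_per_def by simp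
qed

lemma pi_q_alternating:
  assumes "1 < q"
  shows "pi_q q (\<lambda>j. odd j) = (1/q)^2 / (1 - (1/q)^2)"
    and "pi_q q (\<lambda>j. even j) = (1/q) / (1 - (1/q)^2)"
proof -
  have "(\<Sum>j<2. digit (odd j) * (1/q) ^ Suc j) = (1/q)^2"
    "(\<Sum>j<2. digit (even j) * (1/q) ^ Suc j) = 1/q"
    by (simp_all add: numeral_2_eq_2)
  moreover have "pi_q q (\<lambda>j. odd j) = (\<Sum>j<2. digit (odd j) * (1/q) ^ Suc j) / (1 - (1/q)^2)"
    "pi_q q (\<lambda>j. even j) = (\<Sum>j<2. digit (even j) * (1/q) ^ Suc j) / (1 - (1/q)^2)"
    by (rule pi_q_periodic[OF assms]; simp)+
  ultimately show "pi_q q (\<lambda>j. odd j) = (1/q)^2 / (1 - (1/q)^2)"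
    and "pi_q q (\<lambda>j. even j) = (1/q) / (1 - (1/q)^2)"
    by simp_all
qed

lemma pi_q_ones_then_01:
  assumes "1 < q"
  shows "pi_q q (ones_then_01 k)
    = (\<Sum>j<k-2. (1/q) ^ Suc j) + (1/q) ^ (k - 2) * ((1/q)^2 / (1 - (1/q)^2))"
proof -
  have "(\<lambda>j. ones_then_01 k (j + (k - 2))) = (\<lambda>j. odd j)"
    by (simp add: ones_then_01_def)
  moreover have "(\<Sum>j<k-2. digit (ones_then_01 k j) * (1/q) ^ Suc j) = (\<Sum>j<k-2. (1/q) ^ Suc j)"
    by (simp add: ones_then_01_def)
  ultimately show ?thesis
    using pi_q_split[OF assms, of "ones_then_01 k" "k - 2"] pi_q_alternating[OF assms] by simp
qed

lemma pi_q_zeros_then_10: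
  assumes "1 < q"
  shows "pi_q q (zeros_then_10 k) = (1/q) ^ (k - 2) * ((1/q) / (1 - (1/q)^2))"
proof -
  have "(\<lambda>j. zeros_then_10 k (j + (k - 2))) = (\<lambda>j. even j)"
    by (simp add: zeros_then_10_def)
  then show ?thesis
    using pi_q_leading_zeros[OF assms, of "k - 2" "zeros_then_10 k"] pi_q_alternating[OF assms]
    by (simp add: zeros_then_10_def)
qed

lemma pi_q_P_end_le:
  assumes "1 < q" and "3 \<le> k"
  shows "pi_q q (P_end k) \<le> (1/q) ^ (k - 2) * ((1/q) / (1 - 1/q))"
proof -
  have "pi_q q (P_end k) = (1/q) ^ (k - 2) * pi_q q (\<lambda>j. P_end k (j + (k - 2)))"
    using pi_q_leading_zeros[OF assms(1)] P_end_initial_zeros[OF assms(2)] by blast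
  also have "\<dots> \<le> (1/q) ^ (k - 2) * ((1/q) / (1 - 1/q))"
    using pi_q_le_all_ones[OF assms(1)] assms(1) by (intro mult_left_mono) auto
  finally show ?thesis .
qed

lemma pi_q_P_end_ge:
  assumes "1 < q" and "3 \<le> k"
  shows "(1/q) ^ (k - 2) * (\<Sum>j<k-1. (1/q) ^ Suc j) \<le> pi_q q (P_end k)"
proof -
  have "pi_q q (P_end k) = (1/q) ^ (k - 2) * pi_q q (\<lambda>j. P_end k (j + (k - 2)))"
    using pi_q_leading_zeros[OF assms(1)] P_end_initial_zeros[OF assms(2)] by blast
  moreover have "(\<Sum>j<k-1. (1/q) ^ Suc j) \<le> pi_q q (\<lambda>j. P_end k (j + (k - 2)))"
    by (rule pi_q_ge_prefix_sum[OF assms(1)]) (rule P_end_ones[OF assms(2)])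
  ultimately show ?thesis
    using assms(1) by (simp add: mult_left_mono)
qed

lemma pi_q_Q_start_le:
  assumes "1 < q" and "3 \<le> k"
  shows "pi_q q (Q_start k)
    \<le> (\<Sum>j<k-2. (1/q) ^ Suc j) + (1/q) ^ (k - 2) * ((1/q) ^ (k - 1) * ((1/q) / (1 - 1/q)))"
proof -
  have "(\<Sum>j<k-2. digit (Q_start k j) * (1/q) ^ Suc j) \<le> (\<Sum>j<k-2. (1/q) ^ Suc j)"
    using assms(1) by (intro sum_mono) auto
  moreover have "pi_q q (\<lambda>j. Q_start k (j + (k - 2)))
      = (1/q) ^ (k - 1) * pi_q q (\<lambda>j. Q_start k (j + (k - 1) + (k - 2)))"
    using pi_q_leading_zeros[OF assms(1), of "k - 1"] Q_start_zeros[OF assms(2)] by simp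
  moreover have "\<dots> \<le> (1/q) ^ (k - 1) * ((1/q) / (1 - 1/q))"
    using pi_q_le_all_ones[OF assms(1)] assms(1) by (intro mult_left_mono) auto
  ultimately have "(\<Sum>j<k-2. digit (Q_start k j) * (1/q) ^ Suc j)
      + (1/q) ^ (k - 2) * pi_q q (\<lambda>j. Q_start k (j + (k - 2)))
      \<le> (\<Sum>j<k-2. (1/q) ^ Suc j) + (1/q) ^ (k - 2) * ((1/q) ^ (k - 1) * ((1/q) / (1 - 1/q)))"
    using assms(1) by (intro add_mono mult_left_mono) auto
  then show ?thesis
    using pi_q_split[OF assms(1), of "Q_start k" "k - 2"] by simp
qed

section \<open>The root \<open>q_k\<close>\<close>

definition phi :: "nat \<Rightarrow> real \<Rightarrow> real" where
  "phi k x = (\<Sum>j<k. (1/x) ^ Suc j)"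

lemma phi_split:
  assumes "2 \<le> k"
  shows "phi k x = (\<Sum>j<k-2. (1/x) ^ Suc j) + (1/x) ^ (k - 1) + (1/x) ^ k"
proof -
  obtain n where "k = Suc (Suc n)"
    using assms by (metis add_2_eq_Suc le_Suc_ex)
  then show ?thesis
    unfolding phi_def by simp
qed

lemma phi_antimono:
  assumes "0 < x" and "x \<le> y"
  shows "phi k y \<le> phi k x"
proof -
  have "1/y \<le> 1/x"
    using assms by (intro frac_le) auto
  then show ?thesis
    unfolding phi_def using assms by (intro sum_mono power_mono) auto
qed

lemma phi_strict_antimono:
  assumes "0 < x" and "x < y" and "1 \<le> k"
  shows "phi k y < phi k x"
  unfolding phi_def
proof (rule sum_strict_mono_ex1)
  have "1/y \<le> 1/x" "0 \<le> 1/y"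
    using assms by (auto intro: frac_le)
  then show "\<forall>j\<in>{..<k}. (1/y) ^ Suc j \<le> (1/x) ^ Suc j"
    by (intro ballI power_mono)
  show "\<exists>j\<in>{..<k}. (1/y) ^ Suc j < (1/x) ^ Suc j"
    using assms by (intro bexI[of _ 0]) (auto simp: divide_strict_left_mono)
qed simp

lemma phi_mult:
  assumes "x \<noteq> 0"
  shows "phi k x * (x - 1) = 1 - (1/x) ^ k"
proof -
  have "(1/x) ^ Suc j * (x - 1) = (1/x) ^ j - (1/x) ^ Suc j" for j
    using assms by (simp add: field_simps)
  then have "phi k x * (x - 1) = (\<Sum>j<k. (1/x) ^ j - (1/x) ^ Suc j)"
    unfolding phi_def sum_distrib_right by presburger
  also have "\<dots> = 1 - (1/x) ^ k"
    by (rule trans[OF sum_lessThan_telescope']) simp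
  finally show ?thesis .
qed

lemma root_iff_phi_eq_one:
  assumes "1 < x"
  shows "x ^ k - (\<Sum>i<k. x ^ i) = 0 \<longleftrightarrow> phi k x = 1"
proof -
  have x1: "x - 1 \<noteq> 0" and xk: "x ^ k \<noteq> 0"
    using assms by auto
  have sum_eq: "(\<Sum>i<k. x ^ i) * (x - 1) = x ^ k - 1"
    using x1 by (simp add: geometric_sum)
  have "phi k x * (x - 1) * x ^ k = (1 - (1/x) ^ k) * x ^ k"
    using phi_mult[of x k] assms by simp
  also have "\<dots> = x ^ k - 1"
    using xk by (simp add: power_one_over field_simps)
  finally have phi_eq: "phi k x * (x - 1) * x ^ k = x ^ k - 1" .
  show ?thesis
  proof
    assume "x ^ k - (\<Sum>i<k. x ^ i) = 0"
    then have "phi k x * ((x - 1) * x ^ k) = 1 * ((x - 1) * x ^ k)"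
      using sum_eq phi_eq by (simp add: algebra_simps)
    with x1 xk assms show "phi k x = 1"
      by simp
  next
    assume "phi k x = 1"
    then have "(\<Sum>i<k. x ^ i) * (x - 1) = x ^ k * (x - 1)"
      using sum_eq phi_eq by (simp add: algebra_simps)
    with x1 show "x ^ k - (\<Sum>i<k. x ^ i) = 0"
      by simp
  qed
qed

lemma qk_root:
  assumes "2 \<le> k"
  shows "1 < qk k" and "qk k < 2" and "phi k (qk k) = 1"
proof -
  have phi_1: "phi k 1 = k"
    unfolding phi_def by simp
  have phi_2: "phi k 2 < 1"
    using phi_mult[of 2 k] by simp
  have "continuous_on {1..2} (phi k)"
    unfolding phi_def[abs_def] by (intro continuous_intros) auto
  then obtain x where x: "1 \<le> x" "x \<le> 2" "phi k x = 1"
    using IVT2'[of "phi k" 2 1 1] phi_1 phi_2 assms by auto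
  have "x \<noteq> 1" "x \<noteq> 2"
    using x(3) phi_1 phi_2 assms by auto
  with x have x_in: "1 < x" "x < 2"
    by auto
  have "qk k = x"
    unfolding qk_def
  proof (rule the_equality)
    show "1 < x \<and> x < 2 \<and> x ^ k - (\<Sum>i<k. x ^ i) = 0"
      using x x_in root_iff_phi_eq_one by auto
    fix y :: real
    assume "1 < y \<and> y < 2 \<and> y ^ k - (\<Sum>i<k. y ^ i) = 0"
    then have "1 < y" "phi k y = 1"
      using root_iff_phi_eq_one by auto
    then show "y = x"
      using phi_strict_antimono[of x y k] phi_strict_antimono[of y x k] x x_in assms
      by (cases x y rule: linorder_cases) auto
  qed
  with x x_in show "1 < qk k" "qk k < 2" "phi k (qk k) = 1"
    by auto
qed

lemma qk_gt_19_10: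
  assumes "4 \<le> k"
  shows "19/10 < qk k"
proof (rule ccontr)
  assume "\<not> 19/10 < qk k"
  then have "phi k (19/10) \<le> phi k (qk k)"
    using qk_root[of k] assms by (intro phi_antimono) auto
  moreover have "phi 4 (19/10) \<le> phi k (19/10)"
    unfolding phi_def using assms by (intro sum_mono2) auto
  moreover have "1 < phi 4 (19/10)"
    by (simp add: phi_def eval_nat_numeral)
  ultimately show False
    using qk_root[of k] assms by simp
qed

lemma one_less_phi_iff:
  assumes "2 \<le> k" and "0 < q"
  shows "1 < phi k q \<longleftrightarrow> q < qk k"
  using phi_strict_antimono[OF assms(2), of "qk k" k] phi_antimono[of "qk k" q k] qk_root[OF assms(1)]
    assms by (cases "q < qk k") auto

lemma phi_less_one_iff:
  assumes "2 \<le> k" and "0 < q"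
  shows "phi k q < 1 \<longleftrightarrow> qk k < q"
  using phi_strict_antimono[of "qk k" q k] phi_antimono[OF assms(2), of "qk k" k] qk_root[OF assms(1)]
    assms by (cases "qk k < q") auto

lemma abs_phi_minus_one_le:
  assumes "2 \<le> k" and "1 < q"
  shows "\<bar>phi k q - 1\<bar> * (q - 1) \<le> \<bar>q - qk k\<bar>"
proof -
  let ?Q = "qk k"
  have "(1/?Q) ^ k = 2 - ?Q"
    using phi_mult[of ?Q k] qk_root[OF assms(1)] by simp
  moreover have "(phi k q - 1) * (q - 1) = 2 - q - (1/q) ^ k"
    using phi_mult[of q k] assms(2) by (simp add: algebra_simps)
  ultimately have eq: "(phi k q - 1) * (q - 1) = (?Q - q) - ((1/q) ^ k - (1/?Q) ^ k)"
    by simp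
  show ?thesis
  proof (cases "q \<le> ?Q")
    case True
    then have "1 \<le> phi k q" "(1/?Q) ^ k \<le> (1/q) ^ k"
      using phi_antimono[of q ?Q k] qk_root[OF assms(1)] assms(2)
      by (auto intro!: power_mono simp: frac_le)
    with eq True assms(2) show ?thesis
      by simp
  next
    case False
    then have "phi k q < 1" "(1/q) ^ k \<le> (1/?Q) ^ k"
      using phi_less_one_iff[OF assms(1), of q] qk_root[OF assms(1)] assms(2)
      by (auto intro!: power_mono simp: frac_le)
    with eq False assms(2) show ?thesis
      by (simp add: abs_if algebra_simps)
  qed
qed

lemma pi_q_all_ones_minus_one:
  assumes "1 < q"
  shows "pi_q q (\<lambda>_. True) - 1 = (phi k q - 1) + (1/q) ^ (k + 1) / (1 - 1/q)"
proof -
  have "phi k q = (1 - (1/q) ^ k) / (q - 1)"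
    using phi_mult[of q k] assms by (simp add: field_simps)
  moreover have "pi_q q (\<lambda>_. True) = 1 / (q - 1)"
    using pi_q_all_ones[OF assms] assms by (simp add: field_simps)
  moreover have "(1/q) ^ (k + 1) / (1 - 1/q) = (1/q) ^ k / (q - 1)"
    using assms by (simp add: field_simps)
  ultimately show ?thesis
    by (simp add: diff_divide_distrib)
qed

section \<open>Iterates of \<open>g_{q,k}\<close>\<close>

lemma g_qk_eq:
  assumes "0 < q" and "1 \<le> k"
  shows "g_qk q k x = phi k q + (1/q) ^ k * (x - 1)"
proof -
  have "(\<Sum>j\<in>{1..k-1}. 1 / q ^ j) = (\<Sum>j<k-1. (1/q) ^ Suc j)"
    by (simp add: sum.atLeast1_atMost_eq power_one_over)
  moreover have "phi k q = (\<Sum>j<k-1. (1/q) ^ Suc j) + (1/q) ^ k"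
    using assms(2) unfolding phi_def by (induction k rule: nat_induct_at_least) auto
  ultimately show ?thesis
    unfolding g_qk_def by (simp add: algebra_simps power_one_over diff_divide_distrib)
qed

lemma g_qk_iterate:
  assumes "0 < q" and "1 \<le> k"
  shows "(g_qk q k ^^ i) x = 1 + (phi k q - 1) * (\<Sum>l<i. ((1/q) ^ k) ^ l) + ((1/q) ^ k) ^ i * (x - 1)"
proof (induction i)
  case (Suc i)
  have "(g_qk q k ^^ Suc i) x = phi k q + (1/q) ^ k * ((g_qk q k ^^ i) x - 1)"
    using g_qk_eq[OF assms] by simp
  also have "\<dots> = 1 + (phi k q - 1) * (1 + (1/q) ^ k * (\<Sum>l<i. ((1/q) ^ k) ^ l))
      + ((1/q) ^ k) ^ Suc i * (x - 1)"
    unfolding Suc by (simp add: algebra_simps)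
  also have "1 + (1/q) ^ k * (\<Sum>l<i. ((1/q) ^ k) ^ l) = (\<Sum>l<Suc i. ((1/q) ^ k) ^ l)"
    by (simp add: sum.lessThan_Suc_shift sum_distrib_left del: sum.lessThan_Suc)
  finally show ?case .
qed simp

lemma g_qk_iterate_affine:
  assumes "0 < q" and "1 \<le> k"
  shows "(g_qk q k ^^ i) x = (g_qk q k ^^ i) 1 + ((1/q) ^ k) ^ i * (x - 1)"
  unfolding g_qk_iterate[OF assms] by simp

lemma g_qk_iterate_Suc_one:
  assumes "0 < q" and "1 \<le> k"
  shows "(g_qk q k ^^ Suc i) 1 = (g_qk q k ^^ i) 1 + (phi k q - 1) * ((1/q) ^ k) ^ i"
  unfolding g_qk_iterate[OF assms] by (simp add: algebra_simps)

lemma strict_mono_affine: "0 < (a::'a::linordered_idom) \<Longrightarrow> strict_mono (\<lambda>t. c + a * t)"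
  by (rule strict_monoI) simp

lemma strict_mono_g_qk_iterate:
  assumes "0 < q" and "1 \<le> k"
  shows "strict_mono (g_qk q k ^^ i)"
  by (rule strict_monoI) (use assms in \<open>simp add: g_qk_iterate[OF assms]\<close>)

lemma Lm_eqI: "a \<in> X \<Longrightarrow> (\<And>x. x \<in> X \<Longrightarrow> a \<le> x) \<Longrightarrow> Lm X = a"
  unfolding Lm_def by (rule Least_equality)

lemma Rm_eqI: "a \<in> X \<Longrightarrow> (\<And>x. x \<in> X \<Longrightarrow> x \<le> a) \<Longrightarrow> Rm X = a"
  unfolding Rm_def by (rule Greatest_equality)

lemma Lm_compact:
  assumes "compact X" and "X \<noteq> {}"
  shows "Lm X \<in> X" and "x \<in> X \<Longrightarrow> Lm X \<le> x"
proof -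
  obtain a where "a \<in> X" "\<forall>x\<in>X. a \<le> x"
    using compact_attains_inf[OF assms] by blast
  then show "Lm X \<in> X" and "x \<in> X \<Longrightarrow> Lm X \<le> x"
    using Lm_eqI[of a X] by auto
qed

lemma Rm_compact:
  assumes "compact X" and "X \<noteq> {}"
  shows "Rm X \<in> X" and "x \<in> X \<Longrightarrow> x \<le> Rm X"
proof -
  obtain a where "a \<in> X" "\<forall>x\<in>X. x \<le> a"
    using compact_attains_sup[OF assms] by blast
  then show "Rm X \<in> X" and "x \<in> X \<Longrightarrow> x \<le> Rm X"
    using Rm_eqI[of a X] by auto
qed

lemma Lm_strict_mono_image:
  assumes "strict_mono h" and "compact X" and "X \<noteq> {}"
  shows "Lm (h ` X) = h (Lm X)"
  using Lm_compact[OF assms(2,3)] strict_mono_less_eq[OF assms(1)] by (intro Lm_eqI) auto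

lemma Rm_strict_mono_image:
  assumes "strict_mono h" and "compact X" and "X \<noteq> {}"
  shows "Rm (h ` X) = h (Rm X)"
  using Rm_compact[OF assms(2,3)] strict_mono_less_eq[OF assms(1)] by (intro Rm_eqI) auto

lemma strict_mono_image_Int_atLeastAtMost:
  fixes h :: "'a::linorder \<Rightarrow> 'b::linorder"
  assumes "strict_mono h"
  shows "h ` A \<inter> {h a..h b} = h ` (A \<inter> {a..b})"
  using strict_mono_less_eq[OF assms] by auto

lemma power_diff_two_split:
  fixes x :: "'a::comm_semiring_1"
  assumes "2 \<le> k"
  shows "x ^ (k - 1) = x ^ (k - 2) * x" and "x ^ k = x ^ (k - 2) * x^2"
    and "x ^ (k + 1) = x ^ (k - 2) * x^3"
proof -
  have "k - 1 = (k - 2) + 1" "k = (k - 2) + 2" "k + 1 = (k - 2) + 3"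
    using assms by arith+
  then show "x ^ (k - 1) = x ^ (k - 2) * x" and "x ^ k = x ^ (k - 2) * x^2"
    and "x ^ (k + 1) = x ^ (k - 2) * x^3"
    by (metis power_add power_one_right, metis power_add, metis power_add)
qed

lemma sum_power_Suc: "x \<noteq> 1 \<Longrightarrow> (\<Sum>j<n. x ^ Suc j) = x * (1 - x ^ n) / (1 - (x::real))"
proof -
  assume "x \<noteq> 1"
  have "(\<Sum>j<n. x ^ Suc j) = x * (\<Sum>j<n. x ^ j)"
    by (simp add: sum_distrib_left)
  with \<open>x \<noteq> 1\<close> show ?thesis
    by (simp add: sum_gp_strict)
qed

(* r stands for 1/q; the bound q > 100/53 follows from q_k > 19/10 and the closeness hypothesis. *)
locale ratio_bounds =
  fixes k :: nat and r :: real
  assumes four_le_k: "4 \<le> k" and r_pos: "0 < r" and r_lt: "r < 53/100"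
begin

lemma r_powers: "r^2 < 2809/10000" "r^3 < 148877/1000000" "r^4 < 1/11"
proof -
  have pow_lt: "r ^ n < (53/100) ^ n" if "0 < n" for n
    using r_pos r_lt that by (intro power_strict_mono) auto
  show "r^2 < 2809/10000" "r^3 < 148877/1000000"
    using pow_lt[of 2] pow_lt[of 3] by (simp_all add: power_divide)
  have "(53/100::real)^4 < 1/11"
    by (simp add: power_divide)
  with pow_lt[of 4] show "r^4 < 1/11"
    by linarith
qed

lemma denominators_pos: "0 < 1 - r" "0 < 1 - r^2"
  using r_lt r_powers by auto

lemma two_le_k: "2 \<le> k"
  using four_le_k by simp

lemmas power_k_split = power_diff_two_split[OF two_le_k, where x = r]

lemma power_mult_one_plus_lt_one: "r ^ (k - 2) * (1 + r) < 1"
proof -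
  have "r ^ (k - 2) \<le> r^2"
    using r_pos r_lt four_le_k by (intro power_decreasing) auto
  then have "r ^ (k - 2) * (1 + r) \<le> r^2 * (1 + r)"
    using r_pos by (intro mult_right_mono) auto
  also have "\<dots> = r^2 + r^3"
    by (simp add: algebra_simps power2_eq_square power3_eq_cube)
  finally show ?thesis
    using r_powers by linarith
qed

lemma Q_start_tail_le_ones_then_01_tail: "r ^ (k - 1) * (r / (1 - r)) \<le> r^2 / (1 - r^2)"
proof -
  have "r ^ (k - 1) * (r / (1 - r)) = r^2 / (1 - r^2) * (r ^ (k - 2) * (1 + r))"
    using denominators_pos unfolding power_k_split by (simp add: field_simps) algebra
  also have "\<dots> \<le> r^2 / (1 - r^2)"
    using power_mult_one_plus_lt_one denominators_pos by (intro mult_left_le) auto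
  finally show ?thesis .
qed

lemma zeros_then_10_tail_le_P_end_tail: "r / (1 - r^2) \<le> r * (1 - r ^ (k - 1)) / (1 - r)"
proof -
  have "r / (1 - r^2) * 1 \<le> r / (1 - r^2) * (1 + r * (1 - r ^ (k - 2) * (1 + r)))"
    using power_mult_one_plus_lt_one r_pos denominators_pos by (intro mult_left_mono) auto
  also have "\<dots> = r * (1 - r ^ (k - 1)) / (1 - r)"
    using denominators_pos unfolding power_k_split by (simp add: field_simps) algebra
  finally show ?thesis
    by simp
qed

lemma P_end_bounds:
  "r ^ (k - 2) * (r / (1 - r)) < 1"
  "r ^ (k - 2) * (r / (1 - r)) < r * (1 - r ^ (k - 1)) / (1 - r)"
proof -
  have "r ^ (k - 2) * r \<le> r^3"
    using r_pos r_lt four_le_k power_decreasing[of 3 "k - 1" r] unfolding power_k_split by auto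
  then have "r ^ (k - 2) * r < 1 - r"
    using r_powers r_lt by linarith
  with denominators_pos show "r ^ (k - 2) * (r / (1 - r)) < 1"
    by (simp add: pos_divide_less_eq)
  have "r * (r ^ (k - 2) * (1 + r)) < r"
    using power_mult_one_plus_lt_one r_pos by simp
  then have "r ^ (k - 2) * r < r * (1 - r ^ (k - 1))"
    unfolding power_k_split by (simp add: algebra_simps)
  with denominators_pos show "r ^ (k - 2) * (r / (1 - r)) < r * (1 - r ^ (k - 1)) / (1 - r)"
    by (simp add: divide_strict_right_mono)
qed

lemma ones_then_01_gap: "r ^ (k - 1) / 2 \<le> r ^ (k - 1) + r ^ k - r ^ (k - 2) * (r^2 / (1 - r^2))"
proof -
  have "(1/2 + r) * (1 - r^2) = 1/2 + r - r^2 / 2 - r^3"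
    by algebra
  then have "r / (1 - r^2) \<le> 1/2 + r"
    using denominators_pos r_powers r_pos by (simp add: pos_divide_le_eq)
  then have "r ^ (k - 1) * (1/2) \<le> r ^ (k - 1) * (1 + r - r / (1 - r^2))"
    using r_pos by (intro mult_left_mono) auto
  also have "\<dots> = r ^ (k - 1) + r ^ k - r ^ (k - 2) * (r^2 / (1 - r^2))"
    using denominators_pos unfolding power_k_split by (simp add: field_simps) algebra
  finally show ?thesis
    by simp
qed

lemma zeros_then_10_gap: "r ^ (k - 1) / 2 \<le> r ^ (k - 2) * (r / (1 - r^2)) - r ^ (k + 1) / (1 - r)"
proof -
  have expand: "r^2 * (1 + r) = r^2 + r^3"
    by algebra
  have "1/2 \<le> 1 - r^2 * (1 + r)"
    using r_powers unfolding expand by linarith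
  also have "\<dots> \<le> (1 - r^2 * (1 + r)) / (1 - r^2)"
  proof -
    have "(1 - r^2 * (1 + r)) * (1 - r^2) \<le> 1 - r^2 * (1 + r)"
      using r_powers unfolding expand by (intro mult_left_le) auto
    then show ?thesis
      by (simp only: pos_le_divide_eq[OF denominators_pos(2)])
  qed
  also have "\<dots> = 1 / (1 - r^2) - r^2 / (1 - r)"
  proof -
    have "r^2 / (1 - r) = r^2 * (1 + r) / (1 - r^2)"
      using denominators_pos by (simp add: field_simps) algebra
    then show ?thesis
      by (simp only: diff_divide_distrib)
  qed
  finally have "r ^ (k - 1) * (1/2) \<le> r ^ (k - 1) * (1 / (1 - r^2) - r^2 / (1 - r))"
    using r_pos by (intro mult_left_mono) auto
  also have "\<dots> = r ^ (k - 2) * (r / (1 - r^2)) - r ^ (k + 1) / (1 - r)"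
    using denominators_pos unfolding power_k_split by (simp add: field_simps) algebra
  finally show ?thesis
    by simp
qed

lemma geometric_sum_le: "(\<Sum>l<m. (r ^ k) ^ l) \<le> 11/10"
proof -
  have "r ^ k \<le> r^4"
    using r_pos r_lt four_le_k by (intro power_decreasing) auto
  then have s: "0 < r ^ k" "r ^ k < 1/11"
    using r_powers r_pos by auto
  then have "(\<Sum>l<m. (r ^ k) ^ l) = (1 - (r ^ k) ^ m) / (1 - r ^ k)"
    by (simp add: sum_gp_strict)
  also have "\<dots> \<le> 1 / (1 - r ^ k)"
    using s by (intro divide_right_mono) auto
  also have "\<dots> \<le> 11/10"
    using s by (simp add: pos_divide_le_eq)
  finally show ?thesis .
qed

end

section \<open>The sets \<open>P_i(q)\<close> and \<open>Q_m(q)\<close> for \<open>100/53 < q < 2\<close>\<close>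

definition P_core :: "nat \<Rightarrow> real \<Rightarrow> real set" where
  "P_core k q = pi_q q ` S_set k \<inter> {0 .. pi_q q (P_end k)}"

definition Q_core :: "nat \<Rightarrow> real \<Rightarrow> real set" where
  "Q_core k q = pi_q q ` S_set k \<inter> {pi_q q (Q_start k) .. pi_q q (\<lambda>_. True)}"

locale base_range =
  fixes k :: nat and q :: real
  assumes four_le_k: "4 \<le> k" and q_gt: "100/53 < q" and q_lt_2: "q < 2"
begin

sublocale ratio_bounds k "1/q"
  using four_le_k q_gt by unfold_locales (simp_all add: divide_less_eq)

abbreviation s :: real where "s \<equiv> (1/q) ^ k"
abbreviation D :: real where "D \<equiv> phi k q - 1"

lemma one_lt_q: "1 < q" and q_pos: "0 < q"
  using q_gt by simp_all

lemma three_le_k: "3 \<le> k" and one_le_k: "1 \<le> k"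
  using four_le_k by simp_all

lemma pi_Q_start_le_pi_ones_then_01: "pi_q q (Q_start k) \<le> pi_q q (ones_then_01 k)"
proof -
  have "(1/q) ^ (k - 2) * ((1/q) ^ (k - 1) * ((1/q) / (1 - 1/q)))
      \<le> (1/q) ^ (k - 2) * ((1/q)^2 / (1 - (1/q)^2))"
    using Q_start_tail_le_ones_then_01_tail r_pos by (intro mult_left_mono) auto
  then show ?thesis
    using pi_q_Q_start_le[OF one_lt_q three_le_k] pi_q_ones_then_01[OF one_lt_q, of k] by linarith
qed

lemma pi_zeros_then_10_le_pi_P_end: "pi_q q (zeros_then_10 k) \<le> pi_q q (P_end k)"
proof -
  have "(\<Sum>j<k-1. (1/q) ^ Suc j) = (1/q) * (1 - (1/q) ^ (k - 1)) / (1 - 1/q)"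
    using r_lt by (intro sum_power_Suc) auto
  then have "(1/q) / (1 - (1/q)^2) \<le> (\<Sum>j<k-1. (1/q) ^ Suc j)"
    using zeros_then_10_tail_le_P_end_tail by simp
  then have "(1/q) ^ (k - 2) * ((1/q) / (1 - (1/q)^2)) \<le> (1/q) ^ (k - 2) * (\<Sum>j<k-1. (1/q) ^ Suc j)"
    using r_pos by (intro mult_left_mono) auto
  then show ?thesis
    using pi_q_P_end_ge[OF one_lt_q three_le_k] pi_q_zeros_then_10[OF one_lt_q, of k] by linarith
qed

lemma pi_P_end_lt_one: "pi_q q (P_end k) < 1"
  using pi_q_P_end_le[OF one_lt_q three_le_k] P_end_bounds(1) by linarith

lemma pi_P_end_lt_sum: "pi_q q (P_end k) < (\<Sum>j<k-1. (1/q) ^ Suc j)"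
proof -
  have "(\<Sum>j<k-1. (1/q) ^ Suc j) = (1/q) * (1 - (1/q) ^ (k - 1)) / (1 - 1/q)"
    using r_lt by (intro sum_power_Suc) auto
  then show ?thesis
    using pi_q_P_end_le[OF one_lt_q three_le_k] P_end_bounds(2) by linarith
qed

lemma one_minus_pi_ones_then_01_ge: "(1/q) ^ (k - 1) / 2 - D \<le> 1 - pi_q q (ones_then_01 k)"
  using pi_q_ones_then_01[OF one_lt_q, of k] phi_split[OF two_le_k, of q] ones_then_01_gap
  by linarith

lemma pi_zeros_then_10_minus_ge:
  "(1/q) ^ (k - 1) / 2 - D \<le> pi_q q (zeros_then_10 k) - (pi_q q (\<lambda>_. True) - 1)"
  using pi_q_zeros_then_10[OF one_lt_q, of k] pi_q_all_ones_minus_one[OF one_lt_q, of k]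
    zeros_then_10_gap
  by linarith

lemma s_power_bounds: "0 < s ^ m" "s ^ m \<le> 1"
  using one_lt_q by (auto intro!: power_le_one)

lemma power_le_s_power_tail: "(1/q) ^ (k * m + k + 1) \<le> s ^ m * ((1/q) ^ (k + 1) / (1 - 1/q))"
proof -
  have "(1/q) ^ (k + 1) \<le> (1/q) ^ (k + 1) / (1 - 1/q)"
    using r_pos denominators_pos(1) by (simp add: le_divide_eq mult_left_le)
  have "(1/q) ^ (k * m + k + 1) = s ^ m * (1/q) ^ (k + 1)"
    by (simp only: power_add power_mult add.assoc)
  also have "\<dots> \<le> s ^ m * ((1/q) ^ (k + 1) / (1 - 1/q))"
    by (rule mult_left_mono[OF \<open>(1/q) ^ (k + 1) \<le> _\<close> less_imp_le[OF s_power_bounds(1)]])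
  finally show ?thesis .
qed

lemma g_iterate_one: "(g_qk q k ^^ i) 1 = 1 + D * (\<Sum>l<i. s ^ l)"
  unfolding g_qk_iterate[OF q_pos one_le_k] by simp

lemma P_set_eq:
  assumes "i \<le> m"
  shows "P_set m k i q = (\<lambda>t. (g_qk q k ^^ i) 1 + s ^ m * t) ` P_core k q"
proof -
  let ?g = "g_qk q k ^^ i" and ?R = "(1/q) ^ ((m - i) * k)" and ?c = "pi_q q (P_end k)"
  note g = strict_mono_g_qk_iterate[OF q_pos one_le_k, of i] g_qk_iterate_affine[OF q_pos one_le_k, of i]
  have "P_set m k i q = ?g ` ((\<lambda>e. pi_q q e + 1) ` S_set k \<inter> {1 .. 1 + ?R * ?c})"
    unfolding P_set_def by (rule strict_mono_image_Int_atLeastAtMost[OF g(1)])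
  also have "(\<lambda>e. pi_q q e + 1) ` S_set k \<inter> {1 .. 1 + ?R * ?c}
      = (\<lambda>t. 1 + t) ` (pi_q q ` S_set k \<inter> {0 .. ?R * ?c})"
    by (auto simp: image_iff add.commute)
  also have "pi_q q ` S_set k \<inter> {0 .. ?R * ?c} = (\<lambda>t. ?R * t) ` P_core k q"
    unfolding P_core_def
    by (rule pi_q_S_set_Int_scaled[OF one_lt_q pi_P_end_lt_one pi_P_end_lt_sum])
  also have "?g ` (\<lambda>t. 1 + t) ` (\<lambda>t. ?R * t) ` P_core k q = (\<lambda>t. ?g 1 + s ^ m * t) ` P_core k q"
    unfolding image_image
  proof (rule image_cong[OF refl])
    have "?R = s ^ (m - i)"
      by (simp add: power_mult mult.commute)
    then have "s ^ i * ?R = s ^ m"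
      using assms by (simp add: power_add[symmetric])
    then show "?g (1 + ?R * t) = ?g 1 + s ^ m * t" for t
      using g(2)[of "1 + ?R * t"] by (simp add: mult.assoc[symmetric])
  qed
  finally show ?thesis .
qed

lemma Q_set_eq: "Q_set m k q = (g_qk q k ^^ m) ` Q_core k q"
  unfolding Q_set_def Q_core_def pre_per_all_ones
  by (rule strict_mono_image_Int_atLeastAtMost[OF strict_mono_g_qk_iterate[OF q_pos one_le_k]])

lemma compact_P_core: "compact (P_core k q)"
  unfolding P_core_def using compact_pi_q_S_set[OF one_lt_q] by (intro compact_Int_closed) auto

lemma compact_Q_core: "compact (Q_core k q)"
  unfolding Q_core_def using compact_pi_q_S_set[OF one_lt_q] by (intro compact_Int_closed) auto

lemma zero_in_P_core: "0 \<in> P_core k q"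
  unfolding P_core_def
  using const_in_S_set[of k False] four_le_k pi_q_all_zeros pi_q_nonneg[OF one_lt_q]
  by (auto intro!: image_eqI[where x = "\<lambda>_. False"])

lemma zeros_then_10_in_P_core: "pi_q q (zeros_then_10 k) \<in> P_core k q"
  unfolding P_core_def
  using zeros_then_10_in_S_set four_le_k pi_q_nonneg[OF one_lt_q] pi_zeros_then_10_le_pi_P_end
  by auto

lemma all_ones_in_Q_core: "pi_q q (\<lambda>_. True) \<in> Q_core k q"
  unfolding Q_core_def
  using const_in_S_set[of k True] four_le_k pi_q_mono[OF one_lt_q, of "Q_start k" "\<lambda>_. True"]
  by auto

lemma ones_then_01_in_Q_core: "pi_q q (ones_then_01 k) \<in> Q_core k q"
  unfolding Q_core_def
  using ones_then_01_in_S_set four_le_k pi_Q_start_le_pi_ones_then_01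
    pi_q_mono[OF one_lt_q, of "ones_then_01 k" "\<lambda>_. True"]
  by auto

lemma Lm_P_core: "Lm (P_core k q) = 0"
  using zero_in_P_core by (intro Lm_eqI) (auto simp: P_core_def)

lemma Rm_Q_core: "Rm (Q_core k q) = pi_q q (\<lambda>_. True)"
  using all_ones_in_Q_core by (intro Rm_eqI) (auto simp: Q_core_def)

lemma pi_zeros_then_10_le_Rm_P_core: "pi_q q (zeros_then_10 k) \<le> Rm (P_core k q)"
proof -
  have "P_core k q \<noteq> {}"
    using zero_in_P_core by blast
  then show ?thesis
    by (rule Rm_compact(2)[OF compact_P_core _ zeros_then_10_in_P_core])
qed

lemma Lm_Q_core_le_pi_ones_then_01: "Lm (Q_core k q) \<le> pi_q q (ones_then_01 k)"
proof -
  have "Q_core k q \<noteq> {}"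
    using all_ones_in_Q_core by blast
  then show ?thesis
    by (rule Lm_compact(2)[OF compact_Q_core _ ones_then_01_in_Q_core])
qed

lemma Lm_P_set:
  assumes "i \<le> m"
  shows "Lm (P_set m k i q) = (g_qk q k ^^ i) 1"
proof -
  have "strict_mono (\<lambda>t. (g_qk q k ^^ i) 1 + s ^ m * t)"
    using r_pos by (intro strict_mono_affine) simp
  from Lm_strict_mono_image[OF this compact_P_core] zero_in_P_core show ?thesis
    by (auto simp: P_set_eq[OF assms] Lm_P_core)
qed

lemma Rm_P_set:
  assumes "i \<le> m"
  shows "Rm (P_set m k i q) = (g_qk q k ^^ i) 1 + s ^ m * Rm (P_core k q)"
proof -
  have "strict_mono (\<lambda>t. (g_qk q k ^^ i) 1 + s ^ m * t)"
    using r_pos by (intro strict_mono_affine) simp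
  from Rm_strict_mono_image[OF this compact_P_core] zero_in_P_core show ?thesis
    by (auto simp: P_set_eq[OF assms])
qed

lemma Lm_Q_set: "Lm (Q_set m k q) = (g_qk q k ^^ m) 1 + s ^ m * (Lm (Q_core k q) - 1)"
proof -
  have "Lm (Q_set m k q) = (g_qk q k ^^ m) (Lm (Q_core k q))"
    using Lm_strict_mono_image[OF strict_mono_g_qk_iterate[OF q_pos one_le_k] compact_Q_core]
      all_ones_in_Q_core by (auto simp: Q_set_eq)
  also have "\<dots> = (g_qk q k ^^ m) 1 + s ^ m * (Lm (Q_core k q) - 1)"
    by (rule g_qk_iterate_affine[OF q_pos one_le_k])
  finally show ?thesis .
qed

lemma Rm_Q_set: "Rm (Q_set m k q) = (g_qk q k ^^ m) 1 + s ^ m * (pi_q q (\<lambda>_. True) - 1)"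
proof -
  have "Rm (Q_set m k q) = (g_qk q k ^^ m) (pi_q q (\<lambda>_. True))"
    using Rm_strict_mono_image[OF strict_mono_g_qk_iterate[OF q_pos one_le_k] compact_Q_core]
      all_ones_in_Q_core by (auto simp: Q_set_eq Rm_Q_core)
  also have "\<dots> = (g_qk q k ^^ m) 1 + s ^ m * (pi_q q (\<lambda>_. True) - 1)"
    by (rule g_qk_iterate_affine[OF q_pos one_le_k])
  finally show ?thesis .
qed

lemma Lm_P_set_Suc: "i < m \<Longrightarrow> Lm (P_set m k (Suc i) q) = Lm (P_set m k i q) + D * s ^ i"
  using g_qk_iterate_Suc_one[OF q_pos one_le_k] by (simp add: Lm_P_set)

lemma Rm_P_set_Suc: "i < m \<Longrightarrow> Rm (P_set m k (Suc i) q) = Rm (P_set m k i q) + D * s ^ i"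
  using g_qk_iterate_Suc_one[OF q_pos one_le_k] by (simp add: Rm_P_set)

lemma Lm_P_set_lt_Rm_Q_set: "Lm (P_set m k m q) < Rm (Q_set m k q)"
proof -
  have "pi_q q (\<lambda>_. True) = 1 / (q - 1)"
    using pi_q_all_ones[OF one_lt_q] one_lt_q by (simp add: field_simps)
  also have "1 < 1 / (q - 1)"
    using one_lt_q q_lt_2 by (simp add: pos_less_divide_eq)
  finally show ?thesis
    using s_power_bounds(1) by (simp add: Lm_P_set Rm_Q_set)
qed

lemma Lm_Q_set_lt_Lm_P_set_last:
  assumes "D \<le> 0"
  shows "Lm (Q_set m k q) < Lm (P_set m k m q)"
proof -
  have "Lm (Q_core k q) < 1"
    using Lm_Q_core_le_pi_ones_then_01 one_minus_pi_ones_then_01_ge assms r_pos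
      zero_less_power[of "1/q" "k - 1"] by linarith
  then show ?thesis
    using r_pos by (simp add: Lm_P_set Lm_Q_set mult_pos_neg)
qed

lemma Rm_Q_set_lt_Rm_P_set_last:
  assumes "D \<le> 0"
  shows "Rm (Q_set m k q) < Rm (P_set m k m q)"
proof -
  have "pi_q q (\<lambda>_. True) - 1 < Rm (P_core k q)"
    using pi_zeros_then_10_le_Rm_P_core pi_zeros_then_10_minus_ge assms r_pos
      zero_less_power[of "1/q" "k - 1"] by linarith
  then show ?thesis
    using r_pos by (simp add: Rm_P_set Rm_Q_set)
qed

end

section \<open>Parameters close to \<open>q_k\<close>\<close>

lemma of_nat_mult_inverse_power_lt:
  assumes "19/10 < (x::real)"
  shows "real n * (1/x) ^ n < 10/9"
proof -
  have "1 + real n * (x - 1) \<le> x ^ n"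
    using Bernoulli_inequality[of "x - 1" n] assms by simp
  moreover have "real n * (9/10) \<le> real n * (x - 1)"
    using assms by (intro mult_left_mono) auto
  ultimately have "real n < 10/9 * x ^ n"
    by linarith
  moreover have "real n * (1/x) ^ n = real n / x ^ n"
    by (simp add: power_one_over)
  ultimately show ?thesis
    using assms by (simp add: pos_divide_less_eq)
qed

locale near_qk =
  fixes m k :: nat and q :: real
  assumes four_le_k: "4 \<le> k"
    and near: "\<bar>q - qk k\<bar> < 1 / qk k ^ ((m + 2) * k + 3)"
begin

abbreviation \<rho> :: real where "\<rho> \<equiv> 1 / qk k"
abbreviation \<epsilon> :: real where "\<epsilon> \<equiv> \<rho> ^ ((m + 2) * k + 3)"

lemma qk_bounds: "19/10 < qk k" "qk k < 2" "phi k (qk k) = 1"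
  using qk_gt_19_10[OF four_le_k] qk_root[of k] four_le_k by auto

lemma rho_bounds: "0 < \<rho>" "\<rho> < 10/19" "\<rho> < 1"
proof -
  show "0 < \<rho>"
    using qk_bounds by simp
  have "1 / qk k < 1 / (19/10)"
    using qk_bounds by (intro divide_strict_left_mono) auto
  then show "\<rho> < 10/19" "\<rho> < 1"
    by simp_all
qed

lemma rho_power_lt: "6 \<le> n \<Longrightarrow> \<rho> ^ n < 1/40" "8 \<le> n \<Longrightarrow> \<rho> ^ n < 1/100"
proof -
  have le: "\<rho> ^ n \<le> \<rho> ^ j" if "j \<le> n" for j
    using rho_bounds that by (intro power_decreasing) auto
  have lt: "\<rho> ^ j < (10/19) ^ j" if "0 < j" for j
    using rho_bounds that by (intro power_strict_mono) auto
  have "(10/19::real) ^ 6 < 1/40" "(10/19::real) ^ 8 < 1/100"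
    by (simp_all add: power_divide)
  then show "6 \<le> n \<Longrightarrow> \<rho> ^ n < 1/40" "8 \<le> n \<Longrightarrow> \<rho> ^ n < 1/100"
    using le[of 6] le[of 8] lt[of 6] lt[of 8] by linarith+
qed

lemma near_eps: "\<bar>q - qk k\<bar> < \<epsilon>"
  using near by (simp add: power_one_over)

lemma eps_lt: "\<epsilon> < 1/100"
proof -
  have "2 * 4 \<le> (m + 2) * k"
    using four_le_k by (intro mult_le_mono) auto
  then show ?thesis
    by (intro rho_power_lt(2)) simp
qed

sublocale base_range k q
proof unfold_locales
  have "\<epsilon> < \<rho> ^ k"
    using rho_bounds by (intro power_strict_decreasing) auto
  moreover have "\<rho> ^ k = 2 - qk k"
    using phi_mult[of "qk k" k] qk_bounds by simp
  ultimately show "100/53 < q" "q < 2"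
    using near_eps eps_lt qk_bounds unfolding abs_less_iff by linarith+
qed (rule four_le_k)

lemma abs_D_le: "\<bar>D\<bar> \<le> 5/4 * \<epsilon>"
proof -
  have "\<bar>D\<bar> * (4/5) \<le> \<bar>D\<bar> * (q - 1)"
    using q_gt by (intro mult_left_mono) auto
  also have "\<dots> \<le> \<bar>q - qk k\<bar>"
    by (rule abs_phi_minus_one_le[OF two_le_k one_lt_q])
  also have "\<dots> < \<epsilon>"
    by (rule near_eps)
  finally show ?thesis
    by simp
qed

lemma D_pos_iff: "0 < D \<longleftrightarrow> q < qk k"
  using one_less_phi_iff[OF two_le_k, of q] one_lt_q by simp

lemma D_neg_iff: "D < 0 \<longleftrightarrow> qk k < q"
  using phi_less_one_iff[OF two_le_k, of q] one_lt_q by simp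

lemma eps_le_below_qk:
  assumes "q \<le> qk k"
  shows "\<epsilon> \<le> s ^ m * (1/q) ^ (k - 1) / 100"
proof -
  have rho_le: "\<rho> \<le> 1/q"
    using assms one_lt_q by (intro divide_left_mono) auto
  have "(m + 2) * k + 3 = k * m + (k - 1) + (k + 4)"
    using four_le_k by (simp add: algebra_simps)
  then have "\<epsilon> = (\<rho> ^ k) ^ m * \<rho> ^ (k - 1) * \<rho> ^ (k + 4)"
    by (simp only: power_add power_mult)
  also have "\<dots> \<le> s ^ m * (1/q) ^ (k - 1) * (1/100)"
    using rho_le rho_bounds rho_power_lt(2)[of "k + 4"] four_le_k r_pos
    by (intro mult_mono power_mono) auto
  finally show ?thesis
    by simp
qed

lemma D_mul_geometric_lt:
  assumes "0 \<le> D"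
  shows "D * (\<Sum>l<m. s ^ l) < s ^ m * ((1/q) ^ (k - 1) / 2 - D)"
proof -
  let ?B = "s ^ m * (1/q) ^ (k - 1)"
  have "q \<le> qk k"
    using assms D_neg_iff by linarith
  then have eps_le: "\<epsilon> \<le> ?B / 100"
    by (rule eps_le_below_qk)
  have estimate: "a + b < B / 2"
    if "a \<le> d * (11/10)" "b \<le> d" "d \<le> 5/4 * e" "e \<le> B / 100" "0 < B" for a b d e B :: real
    using that by linarith
  have "D * (\<Sum>l<m. s ^ l) \<le> D * (11/10)"
    by (intro mult_left_mono geometric_sum_le assms)
  moreover have "s ^ m * D \<le> D"
    by (rule mult_left_le_one_le[OF assms less_imp_le[OF s_power_bounds(1)] s_power_bounds(2)])
  moreover have "D \<le> 5/4 * \<epsilon>"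
    using abs_D_le abs_of_nonneg[OF assms] by simp
  moreover have "0 < ?B"
    using s_power_bounds(1) r_pos by simp
  ultimately have "D * (\<Sum>l<m. s ^ l) + s ^ m * D < ?B / 2"
    using eps_le by (intro estimate)
  then show ?thesis
    unfolding right_diff_distrib times_divide_eq_right by linarith
qed

lemma r_power_ge:
  assumes "qk k \<le> q"
  shows "3/4 * \<rho> ^ (k * m + k + 1) \<le> (1/q) ^ (k * m + k + 1)"
proof -
  let ?n = "k * m + k + 1"
  have "q - qk k < \<epsilon>"
    using near_eps unfolding abs_less_iff by linarith
  moreover have "\<epsilon> \<le> \<epsilon> * q"
    using one_lt_q rho_bounds by simp
  ultimately have "- \<epsilon> * q \<le> qk k - q"
    by linarith
  then have ratio: "- \<epsilon> \<le> qk k / q - 1"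
    using q_pos by (simp add: field_simps)
  have "1 - real ?n * \<epsilon> \<le> 1 + real ?n * (qk k / q - 1)"
    using mult_left_mono[OF ratio, of "real ?n"] by simp
  also have "\<dots> \<le> (qk k / q) ^ ?n"
    using Bernoulli_inequality[of "qk k / q - 1" ?n] ratio eps_lt by simp
  finally have bernoulli: "1 - real ?n * \<epsilon> \<le> (qk k / q) ^ ?n" .
  have "(m + 2) * k + 3 = ?n + (k + 2)"
    by (simp add: algebra_simps)
  then have "real ?n * \<epsilon> = (real ?n * \<rho> ^ ?n) * \<rho> ^ (k + 2)"
    by (simp only: power_add mult.assoc)
  also have "\<dots> \<le> 10/9 * (1/40)"
    using of_nat_mult_inverse_power_lt[OF qk_bounds(1), of ?n] rho_power_lt(1)[of "k + 2"]
      four_le_k rho_bounds by (intro mult_mono) auto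
  finally have "3/4 \<le> (qk k / q) ^ ?n"
    using bernoulli by simp
  then have "\<rho> ^ ?n * (3/4) \<le> \<rho> ^ ?n * (qk k / q) ^ ?n"
    using rho_bounds by (intro mult_left_mono) auto
  also have "\<dots> = (1/q) ^ ?n"
    using qk_bounds by (simp add: power_mult_distrib[symmetric])
  finally show ?thesis
    by simp
qed

lemma eps_le_rho_power: "\<epsilon> \<le> \<rho> ^ (k * m + k + 1) / 40"
proof -
  have "(m + 2) * k + 3 = (k * m + k + 1) + (k + 2)"
    by (simp add: algebra_simps)
  then have "\<epsilon> = \<rho> ^ (k * m + k + 1) * \<rho> ^ (k + 2)"
    by (simp only: power_add)
  also have "\<dots> \<le> \<rho> ^ (k * m + k + 1) * (1/40)"
    using rho_bounds rho_power_lt(1)[of "k + 2"] four_le_k by (intro mult_left_mono) auto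
  finally show ?thesis
    by simp
qed

lemma minus_D_mul_geometric_lt:
  assumes "D \<le> 0"
  shows "- (D * (\<Sum>l<m. s ^ l)) < s ^ m * (pi_q q (\<lambda>_. True) - 1)"
proof -
  let ?n = "k * m + k + 1" and ?X = "(1/q) ^ (k + 1) / (1 - 1/q)"
  have "qk k \<le> q"
    using assms D_pos_iff by linarith
  then have r_ge: "3/4 * \<rho> ^ ?n \<le> (1/q) ^ ?n"
    by (rule r_power_ge)
  have estimate: "- a < b + x"
    if "d * (11/10) \<le> a" "d \<le> b" "- d \<le> 5/4 * e" "e \<le> y / 40" "0 < y" "3/4 * y \<le> z" "z \<le> x"
    for a b d e x y z :: real
    using that by linarith
  have "0 \<le> - D"
    using assms by simp
  from mult_left_le_one_le[OF this less_imp_le[OF s_power_bounds(1)[of m]] s_power_bounds(2)[of m]]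
  have D_le: "D \<le> s ^ m * D"
    unfolding mult_minus_right by linarith
  have G: "D * (11/10) \<le> D * (\<Sum>l<m. s ^ l)"
    by (rule mult_left_mono_neg[OF geometric_sum_le assms])
  have minus_D: "- D \<le> 5/4 * \<epsilon>"
    using abs_D_le abs_of_nonpos[OF assms] by simp
  have rho_pos: "0 < \<rho> ^ ?n"
    using rho_bounds by simp
  have "s ^ m * (pi_q q (\<lambda>_. True) - 1) = s ^ m * D + s ^ m * ?X"
    unfolding pi_q_all_ones_minus_one[OF one_lt_q, of k] by (rule distrib_left)
  then show ?thesis
    using estimate[OF G D_le minus_D eps_le_rho_power rho_pos r_ge power_le_s_power_tail] by simp
qed

lemma Lm_Q_set_lt_Lm_P_set_first:
  assumes "0 \<le> D"
  shows "Lm (Q_set m k q) < Lm (P_set m k 0 q)"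
proof -
  have "s ^ m * ((1/q) ^ (k - 1) / 2 - D) \<le> s ^ m * (1 - Lm (Q_core k q))"
    using one_minus_pi_ones_then_01_ge Lm_Q_core_le_pi_ones_then_01 r_pos
    by (intro mult_left_mono) auto
  moreover have "s ^ m * (Lm (Q_core k q) - 1) = - (s ^ m * (1 - Lm (Q_core k q)))"
    by (simp add: algebra_simps)
  ultimately show ?thesis
    using D_mul_geometric_lt[OF assms] by (simp add: Lm_Q_set Lm_P_set g_iterate_one)
qed

lemma Rm_Q_set_lt_Rm_P_set_first:
  assumes "0 \<le> D"
  shows "Rm (Q_set m k q) < Rm (P_set m k 0 q)"
proof -
  have "s ^ m * ((1/q) ^ (k - 1) / 2 - D) \<le> s ^ m * (Rm (P_core k q) - (pi_q q (\<lambda>_. True) - 1))"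
    using pi_zeros_then_10_minus_ge pi_zeros_then_10_le_Rm_P_core r_pos
    by (intro mult_left_mono) auto
  then show ?thesis
    using D_mul_geometric_lt[OF assms]
    by (simp add: Rm_Q_set Rm_P_set g_iterate_one right_diff_distrib)
qed

lemma Lm_P_set_first_lt_Rm_Q_set:
  assumes "D \<le> 0"
  shows "Lm (P_set m k 0 q) < Rm (Q_set m k q)"
  using minus_D_mul_geometric_lt[OF assms] by (simp add: Lm_P_set Rm_Q_set g_iterate_one)

end

theorem lemma3p7:
  fixes m k :: nat and q :: real
  assumes "k \<ge> 4"
    and "\<bar>q - qk k\<bar> < 1 / qk k ^ ((m + 2) * k + 3)"
  shows "(q < qk k \<longrightarrow>
            Lm (Q_set m k q) < Lm (P_set m k 0 q)
          \<and> (\<forall>i<m. Lm (P_set m k i q) < Lm (P_set m k (Suc i) q))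
          \<and> Lm (P_set m k m q) < Rm (Q_set m k q)
          \<and> Rm (Q_set m k q) < Rm (P_set m k 0 q)
          \<and> (\<forall>i<m. Rm (P_set m k i q) < Rm (P_set m k (Suc i) q)))
       \<and> (q = qk k \<longrightarrow>
            Lm (Q_set m k q) < Lm (P_set m k 0 q)
          \<and> (\<forall>i<m. Lm (P_set m k i q) = Lm (P_set m k (Suc i) q))
          \<and> Lm (P_set m k m q) < Rm (Q_set m k q)
          \<and> Rm (Q_set m k q) < Rm (P_set m k 0 q)
          \<and> (\<forall>i<m. Rm (P_set m k i q) = Rm (P_set m k (Suc i) q)))
       \<and> (q > qk k \<longrightarrow>
            Lm (Q_set m k q) < Lm (P_set m k m q)
          \<and> (\<forall>i<m. Lm (P_set m k (Suc i) q) < Lm (P_set m k i q))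
          \<and> Lm (P_set m k 0 q) < Rm (Q_set m k q)
          \<and> Rm (Q_set m k q) < Rm (P_set m k m q)
          \<and> (\<forall>i<m. Rm (P_set m k (Suc i) q) < Rm (P_set m k i q)))"
proof -
  interpret near_qk m k q
    using assms by unfold_locales
  have guards: "q < qk k \<longleftrightarrow> 0 < D" "q = qk k \<longleftrightarrow> D = 0" "qk k < q \<longleftrightarrow> D < 0"
    using D_pos_iff D_neg_iff by auto
  show ?thesis
    unfolding guards
    using Lm_P_set_Suc Rm_P_set_Suc s_power_bounds(1)
      Lm_Q_set_lt_Lm_P_set_first Rm_Q_set_lt_Rm_P_set_first Lm_P_set_lt_Rm_Q_set
      Lm_Q_set_lt_Lm_P_set_last Rm_Q_set_lt_Rm_P_set_last Lm_P_set_first_lt_Rm_Q_set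
    by (auto simp: zero_less_mult_iff mult_less_0_iff)
qed

end
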